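(* Let $X$ be a finite set with at least two elements. If a transition function $t$ has a persistent craving representation, then for every $x\in X$, $\nu_X\ne\nu_{X\setminus\{x\}}$.
   Context: $\mathcal{L}(X)$ is the set of linear orders on $X$, $M(\succ,A)$ the $\succ$-maximal element of $A$. Given a linear order $\rhd$, the craving preferences $\{\succ_x\}_{x\in X}$ are: $x\succ_x y$ for all $y\ne x$, and for $y,z\ne x$, $y\succ_x z$ iff $y\rhd z$. A distribution $\nu$ supported on $\{\succ_x\}$ is craving monotonic w.r.t. $\rhd$ if $x\rhd y$ implies $\nu(\succ_x)>\nu(\succ_y)>0$. A persistence function is $\phi:X^2\to[0,1)$ with $\phi(x,x)=0$, $\phi(x,y)>0$ for $x\ne y$. A transition function $t:X\times\mathcal{L}(X)\to\Delta(\mathcal{L}(X))$ has a persistent craving representation if for some $\rhd$, craving monotonic $\nu$ and persistence function $\phi$: $t(x,\succ_y)=\phi(x,y)\delta_{\succ_y}+(1-\phi(x,y))\nu$ for all $x,y$ and $t(x,\succ)=\nu$ for $\succ$ outside the support of $\nu$. For nonempty $A\subseteq X$, $\nu_A$ is the unique stationary distribution of the Markov chain on $\mathcal{L}(X)$ with $m_A(\succ,\succ')=t_{\succ'}(M(\succ,A),\succ)$. *)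

theory Defs
  imports "HOL-Probability.Probability_Mass_Function"
begin

text \<open>Preferences are strict linear orders on X, represented as relations;
  (a, b) \<in> r means "a is strictly preferred to b".\<close>

definition linorders :: "'a set \<Rightarrow> 'a rel set" where
  "linorders X = {r. strict_linear_order_on X r \<and> r \<subseteq> X \<times> X}"

definition maxel :: "'a rel \<Rightarrow> 'a set \<Rightarrow> 'a" where
  "maxel r A = (THE a. a \<in> A \<and> (\<forall>b\<in>A. b \<noteq> a \<longrightarrow> (a, b) \<in> r))"

definition craving :: "'a set \<Rightarrow> 'a rel \<Rightarrow> 'a \<Rightarrow> 'a rel" where
  "craving X R x = {(a, b). a \<in> X \<and> b \<in> X \<and> a \<noteq> b \<and> (a = x \<or> (b \<noteq> x \<and> (a, b) \<in> R))}"

definition craving_monotonic :: "'a set \<Rightarrow> 'a rel \<Rightarrow> 'a rel pmf \<Rightarrow> bool" where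
  "craving_monotonic X R \<nu> \<longleftrightarrow>
     set_pmf \<nu> \<subseteq> craving X R ` X \<and>
     (\<forall>x\<in>X. \<forall>y\<in>X. (x, y) \<in> R \<longrightarrow>
        pmf \<nu> (craving X R x) > pmf \<nu> (craving X R y) \<and> pmf \<nu> (craving X R y) > 0)"

definition persistence :: "'a set \<Rightarrow> ('a \<Rightarrow> 'a \<Rightarrow> real) \<Rightarrow> bool" where
  "persistence X \<phi> \<longleftrightarrow>
     (\<forall>x\<in>X. \<forall>y\<in>X. 0 \<le> \<phi> x y \<and> \<phi> x y < 1 \<and> \<phi> x x = 0 \<and> (x \<noteq> y \<longrightarrow> \<phi> x y > 0))"

text \<open>Transition function t: the distribution t x r over next preferences,
  given the chosen alternative x and the current preference r.\<close>
definition persistent_craving_rep :: "'a set \<Rightarrow> ('a \<Rightarrow> 'a rel \<Rightarrow> 'a rel pmf) \<Rightarrow> bool" where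
  "persistent_craving_rep X t \<longleftrightarrow>
     (\<exists>R \<nu> \<phi>. R \<in> linorders X \<and> craving_monotonic X R \<nu> \<and> persistence X \<phi> \<and>
       (\<forall>x\<in>X. \<forall>y\<in>X. \<forall>r'. pmf (t x (craving X R y)) r' =
           \<phi> x y * (if r' = craving X R y then 1 else 0) + (1 - \<phi> x y) * pmf \<nu> r') \<and>
       (\<forall>x\<in>X. \<forall>r\<in>linorders X. r \<notin> set_pmf \<nu> \<longrightarrow> t x r = \<nu>))"

definition stationary :: "'a set \<Rightarrow> ('a \<Rightarrow> 'a rel \<Rightarrow> 'a rel pmf) \<Rightarrow> 'a set \<Rightarrow> 'a rel pmf \<Rightarrow> bool" where
  "stationary X t A \<pi> \<longleftrightarrow>
     set_pmf \<pi> \<subseteq> linorders X \<and>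
     (\<forall>r'\<in>linorders X. pmf \<pi> r' = (\<Sum>r\<in>linorders X. pmf \<pi> r * pmf (t (maxel r A) r) r'))"

definition nu :: "'a set \<Rightarrow> ('a \<Rightarrow> 'a rel \<Rightarrow> 'a rel pmf) \<Rightarrow> 'a set \<Rightarrow> 'a rel pmf" where
  "nu X t A = (THE \<pi>. stationary X t A \<pi>)"

end

theory Submission
  imports Defs
begin

text \<open>Write \<open>c y\<close> for the craving preference of \<open>y\<close> and \<open>s = c x\<close>.
  For \<open>A = X\<close> the chain forgets its state: from \<open>c y\<close> the choice is \<open>y\<close> itself, which does not
  persist since \<open>\<phi>(y, y) = 0\<close>, and outside the support of \<open>\<nu>\<close> the next preference is drawn
  from \<open>\<nu>\<close> anyway; hence every row of the chain is \<open>\<nu>\<close> and \<open>\<nu>\<^sub>X = \<nu>\<close>.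
  For \<open>A = X - {x}\<close> the same holds for every row except the one of \<open>s\<close>: there the choice is
  some \<open>a \<noteq> x\<close>, and \<open>s\<close> persists with probability \<open>\<phi>(a, x) > 0\<close>. The unique stationary
  distribution is then a proper mixture of \<open>\<delta>\<^sub>s\<close> and \<open>\<nu>\<close>, which differs from \<open>\<nu>\<close> because
  \<open>0 < \<nu>(s) < 1\<close>.\<close>

definition point_mix :: "real \<Rightarrow> 'b \<Rightarrow> 'b pmf \<Rightarrow> 'b pmf" where
  "point_mix w s \<nu> = bernoulli_pmf w \<bind> (\<lambda>b. if b then return_pmf s else \<nu>)"

lemma pmf_point_mix:
  assumes "0 \<le> w" "w \<le> 1"
  shows "pmf (point_mix w s \<nu>) r = w * (if r = s then 1 else 0) + (1 - w) * pmf \<nu> r"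
  using assms by (simp add: point_mix_def pmf_bind)

lemma point_mix_0 [simp]: "point_mix 0 s \<nu> = \<nu>"
  by (rule pmf_eqI) (simp add: pmf_point_mix)

lemma set_pmf_point_mix_subset:
  "s \<in> L \<Longrightarrow> set_pmf \<nu> \<subseteq> L \<Longrightarrow> set_pmf (point_mix w s \<nu>) \<subseteq> L"
  by (auto simp: point_mix_def split: if_splits)

lemma point_mix_neq:
  assumes "0 < w" "w \<le> 1" "pmf \<nu> s < 1"
  shows "point_mix w s \<nu> \<noteq> \<nu>"
proof
  assume "point_mix w s \<nu> = \<nu>"
  then have "pmf \<nu> s = w + (1 - w) * pmf \<nu> s"
    using pmf_point_mix[of w s \<nu> s] assms by simp
  then have "w * (1 - pmf \<nu> s) = 0"
    by (simp add: algebra_simps)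
  with assms show False
    by simp
qed

lemma pmf_eq_on_supersetI:
  assumes "set_pmf \<pi> \<subseteq> L" "set_pmf \<pi>' \<subseteq> L" "\<forall>r\<in>L. pmf \<pi> r = pmf \<pi>' r"
  shows "\<pi> = \<pi>'"
proof (rule pmf_eqI)
  fix r
  show "pmf \<pi> r = pmf \<pi>' r"
  proof (cases "r \<in> L")
    case False
    then have "r \<notin> set_pmf \<pi>" "r \<notin> set_pmf \<pi>'"
      using assms(1,2) by auto
    then show ?thesis
      by (simp add: set_pmf_iff)
  qed (use assms(3) in auto)
qed

lemma sum_pmf_times_shift:
  assumes "finite L" "set_pmf \<pi> \<subseteq> L" "s \<in> L"
  shows "(\<Sum>r\<in>L. pmf \<pi> r * (a + (if r = s then g else 0))) = a + pmf \<pi> s * (g :: real)"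
proof -
  have "(\<Sum>r\<in>L. pmf \<pi> r * (a + (if r = s then g else 0)))
      = (\<Sum>r\<in>L. pmf \<pi> r * a + (if r = s then pmf \<pi> r * g else 0))"
    by (rule sum.cong) (auto simp: distrib_left)
  also have "\<dots> = (\<Sum>r\<in>L. pmf \<pi> r) * a + pmf \<pi> s * g"
    using assms(1,3) by (simp add: sum.distrib sum_distrib_right)
  also have "\<dots> = a + pmf \<pi> s * g"
    using sum_pmf_eq_1[OF assms(1,2)] by simp
  finally show ?thesis .
qed

definition stationary_on :: "'b set \<Rightarrow> ('b \<Rightarrow> 'b pmf) \<Rightarrow> 'b pmf \<Rightarrow> bool" where
  "stationary_on L K \<pi> \<longleftrightarrow>
     set_pmf \<pi> \<subseteq> L \<and> (\<forall>r'\<in>L. pmf \<pi> r' = (\<Sum>r\<in>L. pmf \<pi> r * pmf (K r) r'))"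

lemma stationary_iff_stationary_on:
  "stationary X t A \<pi> \<longleftrightarrow> stationary_on (linorders X) (\<lambda>r. t (maxel r A) r) \<pi>"
  by (simp add: stationary_def stationary_on_def)

lemma stationary_on_const_iff:
  assumes "finite L" "set_pmf \<nu> \<subseteq> L" "\<forall>r\<in>L. K r = \<nu>"
  shows "stationary_on L K \<pi> \<longleftrightarrow> \<pi> = \<nu>"
proof -
  have one_step: "(\<Sum>r\<in>L. pmf \<pi> r * pmf (K r) r') = pmf \<nu> r'" if "set_pmf \<pi> \<subseteq> L" for \<pi> r'
  proof -
    have "(\<Sum>r\<in>L. pmf \<pi> r * pmf (K r) r') = (\<Sum>r\<in>L. pmf \<pi> r) * pmf \<nu> r'"
      using assms(3) by (simp add: sum_distrib_right)
    then show ?thesis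
      using sum_pmf_eq_1[OF assms(1) that] by simp
  qed
  show ?thesis
  proof
    assume "stationary_on L K \<pi>"
    then have supp: "set_pmf \<pi> \<subseteq> L"
      and balance: "\<forall>r'\<in>L. pmf \<pi> r' = (\<Sum>r\<in>L. pmf \<pi> r * pmf (K r) r')"
      unfolding stationary_on_def by blast+
    have "\<forall>r'\<in>L. pmf \<pi> r' = pmf \<nu> r'"
      using balance one_step[OF supp] by simp
    then show "\<pi> = \<nu>"
      by (rule pmf_eq_on_supersetI[OF supp assms(2)])
  next
    assume "\<pi> = \<nu>"
    then show "stationary_on L K \<pi>"
      using one_step assms(2) unfolding stationary_on_def by simp
  qed
qed

text \<open>If \<open>\<pi> = w \<delta>\<^sub>s + (1 - w) \<nu>\<close> with \<open>w = f \<pi>(s)\<close>, then evaluating at \<open>s\<close> gives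
  \<open>\<pi>(s) = p / (1 - f (1 - p))\<close> for \<open>p = \<nu>(s)\<close>; the sticky weight is \<open>f\<close> times this mass.\<close>

definition sticky_weight :: "real \<Rightarrow> real \<Rightarrow> real" where
  "sticky_weight f p = f * p / (1 - f * (1 - p))"

lemma sticky_denominator_pos:
  fixes f p :: real
  assumes "0 \<le> f" "f < 1" "0 \<le> p"
  shows "1 - f * (1 - p) > 0"
proof -
  have "f * (1 - p) \<le> f"
    using assms(1,3) by (simp add: algebra_simps)
  with assms(2) show ?thesis
    by linarith
qed

lemma sticky_weight_bounds:
  assumes "0 \<le> f" "f < 1" "0 \<le> p"
  shows "0 \<le> sticky_weight f p" "sticky_weight f p \<le> 1"
proof -
  have "f * p \<le> 1 - f * (1 - p)"
    using assms(2) by (simp add: algebra_simps)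
  then show "0 \<le> sticky_weight f p" "sticky_weight f p \<le> 1"
    unfolding sticky_weight_def using assms sticky_denominator_pos[OF assms]
    by (simp_all add: pos_divide_le_eq)
qed

lemma sticky_weight_pos:
  assumes "0 < f" "f < 1" "0 < p"
  shows "0 < sticky_weight f p"
  unfolding sticky_weight_def using assms sticky_denominator_pos[of f p] by simp

lemma point_mix_fixpoint_iff:
  fixes f :: real
  assumes "0 \<le> f" "f < 1"
  shows "\<pi> = point_mix (f * pmf \<pi> s) s \<nu> \<longleftrightarrow> \<pi> = point_mix (sticky_weight f (pmf \<nu> s)) s \<nu>"
proof -
  define w where "w = sticky_weight f (pmf \<nu> s)"
  have weight: "f * pmf (point_mix v s \<nu>) s = v \<longleftrightarrow> v = w" if "0 \<le> v" "v \<le> 1" for v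
  proof -
    have "f * pmf (point_mix v s \<nu>) s = v \<longleftrightarrow> v * (1 - f * (1 - pmf \<nu> s)) = f * pmf \<nu> s"
      using that by (simp add: pmf_point_mix algebra_simps) linarith
    also have "\<dots> \<longleftrightarrow> v = w"
      using sticky_denominator_pos[OF assms pmf_nonneg[of \<nu> s]]
      by (simp add: w_def sticky_weight_def eq_divide_eq)
    finally show ?thesis .
  qed
  show ?thesis
    unfolding w_def[symmetric]
  proof
    assume \<pi>_fix: "\<pi> = point_mix (f * pmf \<pi> s) s \<nu>"
    \<comment> \<open>\<open>\<pi>\<close> occurs on both sides, so this equation must never reach the simplifier.\<close>
    have "0 \<le> f * pmf \<pi> s" "f * pmf \<pi> s \<le> 1"
      using assms(1) mult_le_one[OF less_imp_le[OF assms(2)] pmf_nonneg pmf_le_1] by simp_all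
    moreover have "f * pmf (point_mix (f * pmf \<pi> s) s \<nu>) s = f * pmf \<pi> s"
      using arg_cong[where f = "\<lambda>p. f * pmf p s", OF \<pi>_fix] by (rule sym)
    ultimately have "f * pmf \<pi> s = w"
      using weight[of "f * pmf \<pi> s"] by (simp only:)
    then have "point_mix (f * pmf \<pi> s) s \<nu> = point_mix w s \<nu>"
      by simp
    with \<pi>_fix show "\<pi> = point_mix w s \<nu>"
      by (rule trans)
  next
    assume \<pi>_w: "\<pi> = point_mix w s \<nu>"
    then have "f * pmf \<pi> s = w"
      using weight sticky_weight_bounds[OF assms pmf_nonneg[of \<nu> s]] by (simp add: w_def)
    with \<pi>_w show "\<pi> = point_mix (f * pmf \<pi> s) s \<nu>"
      by simp
  qed
qed

lemma stationary_on_sticky_iff_fixpoint: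
  fixes f :: real
  assumes "finite L" "set_pmf \<nu> \<subseteq> L" "s \<in> L" "0 \<le> f" "f \<le> 1"
    and "\<forall>r\<in>L - {s}. K r = \<nu>" "K s = point_mix f s \<nu>"
  shows "stationary_on L K \<pi> \<longleftrightarrow> set_pmf \<pi> \<subseteq> L \<and> \<pi> = point_mix (f * pmf \<pi> s) s \<nu>"
proof (cases "set_pmf \<pi> \<subseteq> L")
  case True
  have row: "pmf (K r) r' = pmf \<nu> r' + (if r = s then f * ((if r' = s then 1 else 0) - pmf \<nu> r') else 0)"
    if "r \<in> L" for r r'
    using that assms(4-7) by (auto simp: pmf_point_mix algebra_simps)
  have "0 \<le> f * pmf \<pi> s" "f * pmf \<pi> s \<le> 1"
    using assms(4) mult_le_one[OF assms(5) pmf_nonneg pmf_le_1] by simp_all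
  then have one_step: "(\<Sum>r\<in>L. pmf \<pi> r * pmf (K r) r') = pmf (point_mix (f * pmf \<pi> s) s \<nu>) r'" for r'
    using sum_pmf_times_shift[OF assms(1) True assms(3)]
    by (simp add: row pmf_point_mix algebra_simps)
  have "(\<forall>r'\<in>L. pmf \<pi> r' = (\<Sum>r\<in>L. pmf \<pi> r * pmf (K r) r'))
      \<longleftrightarrow> (\<forall>r'\<in>L. pmf \<pi> r' = pmf (point_mix (f * pmf \<pi> s) s \<nu>) r')"
    by (simp only: one_step)
  also have "\<dots> \<longleftrightarrow> \<pi> = point_mix (f * pmf \<pi> s) s \<nu>"
  proof
    assume "\<forall>r'\<in>L. pmf \<pi> r' = pmf (point_mix (f * pmf \<pi> s) s \<nu>) r'"
    then show "\<pi> = point_mix (f * pmf \<pi> s) s \<nu>"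
      by (rule pmf_eq_on_supersetI[OF True set_pmf_point_mix_subset[OF assms(3,2)]])
  next
    assume eq: "\<pi> = point_mix (f * pmf \<pi> s) s \<nu>"
    show "\<forall>r'\<in>L. pmf \<pi> r' = pmf (point_mix (f * pmf \<pi> s) s \<nu>) r'"
      using arg_cong[where f = "\<lambda>p. pmf p r'" for r', OF eq] by blast
  qed
  finally show ?thesis
    unfolding stationary_on_def using True by (simp only: simp_thms)
next
  case False
  then show ?thesis
    unfolding stationary_on_def by (simp only: simp_thms)
qed

lemma stationary_on_sticky_iff:
  fixes f :: real
  assumes "finite L" "set_pmf \<nu> \<subseteq> L" "s \<in> L" "0 \<le> f" "f < 1"
    and "\<forall>r\<in>L - {s}. K r = \<nu>" "K s = point_mix f s \<nu>"
  shows "stationary_on L K \<pi> \<longleftrightarrow> \<pi> = point_mix (sticky_weight f (pmf \<nu> s)) s \<nu>"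
proof -
  have "stationary_on L K \<pi> \<longleftrightarrow> set_pmf \<pi> \<subseteq> L \<and> \<pi> = point_mix (f * pmf \<pi> s) s \<nu>"
    by (rule stationary_on_sticky_iff_fixpoint[OF assms(1-4) less_imp_le[OF assms(5)] assms(6,7)])
  also have "\<dots> \<longleftrightarrow> set_pmf \<pi> \<subseteq> L \<and> \<pi> = point_mix (sticky_weight f (pmf \<nu> s)) s \<nu>"
    by (simp only: point_mix_fixpoint_iff[OF assms(4,5)])
  also have "\<dots> \<longleftrightarrow> \<pi> = point_mix (sticky_weight f (pmf \<nu> s)) s \<nu>"
    using set_pmf_point_mix_subset[OF assms(3,2)] by auto
  finally show ?thesis .
qed

lemma craving_in_linorders:
  assumes "R \<in> linorders X" "y \<in> X"
  shows "craving X R y \<in> linorders X"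
  using assms unfolding linorders_def strict_linear_order_on_def craving_def
    trans_def irrefl_def total_on_def
  by (auto; blast)

lemma inj_on_craving: "inj_on (craving X R) X"
proof (rule inj_onI)
  fix y z
  assume yz: "y \<in> X" "z \<in> X" and eq: "craving X R y = craving X R z"
  show "y = z"
  proof (rule ccontr)
    assume "y \<noteq> z"
    then have "(y, z) \<in> craving X R y" "(y, z) \<notin> craving X R z"
      using yz by (auto simp: craving_def)
    with eq show False
      by simp
  qed
qed

lemma linorders_has_max:
  assumes "finite X" "r \<in> linorders X" "A \<subseteq> X" "A \<noteq> {}"
  shows "\<exists>a\<in>A. \<forall>b\<in>A. b \<noteq> a \<longrightarrow> (a, b) \<in> r"
proof -
  have r: "strict_linear_order_on X r" "r \<subseteq> X \<times> X"
    using assms(2) by (auto simp: linorders_def)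
  have "finite r"
    using finite_subset[OF r(2)] assms(1) by blast
  moreover have "acyclic r"
    using r(1) by (simp add: strict_linear_order_on_def acyclic_irrefl)
  ultimately have "wf r"
    by (rule finite_acyclic_wf)
  then obtain a where a: "a \<in> A" "\<forall>b. (b, a) \<in> r \<longrightarrow> b \<notin> A"
    using assms(4) unfolding wf_eq_minimal by blast
  have "(a, b) \<in> r" if "b \<in> A" "b \<noteq> a" for b
    using r(1) a assms(3) that unfolding strict_linear_order_on_def total_on_def by blast
  with a(1) show ?thesis
    by blast
qed

lemma maxel_eqI:
  assumes "strict_linear_order_on X r" "a \<in> A" "\<forall>b\<in>A. b \<noteq> a \<longrightarrow> (a, b) \<in> r"
  shows "maxel r A = a"
  unfolding maxel_def
proof (rule the_equality)
  show "a \<in> A \<and> (\<forall>b\<in>A. b \<noteq> a \<longrightarrow> (a, b) \<in> r)"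
    using assms(2,3) by blast
next
  fix a'
  assume a': "a' \<in> A \<and> (\<forall>b\<in>A. b \<noteq> a' \<longrightarrow> (a', b) \<in> r)"
  show "a' = a"
  proof (rule ccontr)
    assume "a' \<noteq> a"
    then have "(a, a') \<in> r" "(a', a) \<in> r"
      using a' assms(2,3) by auto
    then show False
      using assms(1) unfolding strict_linear_order_on_def trans_def irrefl_def by blast
  qed
qed

lemma maxel_in:
  assumes "finite X" "r \<in> linorders X" "A \<subseteq> X" "A \<noteq> {}"
  shows "maxel r A \<in> A"
proof -
  obtain a where "a \<in> A" "\<forall>b\<in>A. b \<noteq> a \<longrightarrow> (a, b) \<in> r"
    using linorders_has_max[OF assms] by blast
  moreover have "strict_linear_order_on X r"
    using assms(2) by (simp add: linorders_def)
  ultimately show ?thesis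
    using maxel_eqI by metis
qed

lemma maxel_craving:
  assumes "R \<in> linorders X" "y \<in> A" "A \<subseteq> X"
  shows "maxel (craving X R y) A = y"
proof (rule maxel_eqI)
  show "strict_linear_order_on X (craving X R y)"
    using craving_in_linorders[OF assms(1)] assms(2,3) by (auto simp: linorders_def)
  show "\<forall>b\<in>A. b \<noteq> y \<longrightarrow> (y, b) \<in> craving X R y"
    using assms(2,3) by (auto simp: craving_def)
qed (rule assms(2))

lemma finite_linorders: "finite X \<Longrightarrow> finite (linorders X)"
  by (rule finite_subset[of _ "Pow (X \<times> X)"]) (auto simp: linorders_def)

lemma card_ge_2_Diff_singleton_not_empty:
  assumes "card X \<ge> 2"
  shows "X - {x} \<noteq> {}"
proof
  assume "X - {x} = {}"
  then have "card X \<le> card {x}"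
    by (intro card_mono) auto
  with assms show False
    by simp
qed

lemma nu_eqI: "(\<And>\<pi>. stationary X t A \<pi> \<longleftrightarrow> \<pi> = \<pi>\<^sub>0) \<Longrightarrow> nu X t A = \<pi>\<^sub>0"
  by (simp add: nu_def)

locale persistent_craving =
  fixes X :: "'a set" and t :: "'a \<Rightarrow> 'a rel \<Rightarrow> 'a rel pmf"
    and R :: "'a rel" and \<nu> :: "'a rel pmf" and \<phi> :: "'a \<Rightarrow> 'a \<Rightarrow> real"
  assumes finite_X: "finite X"
    and R_linorder: "R \<in> linorders X"
    and monotonic: "craving_monotonic X R \<nu>"
    and persistence: "persistence X \<phi>"
    and pmf_t_craving: "\<And>x y r'. x \<in> X \<Longrightarrow> y \<in> X \<Longrightarrow> pmf (t x (craving X R y)) r' =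
       \<phi> x y * (if r' = craving X R y then 1 else 0) + (1 - \<phi> x y) * pmf \<nu> r'"
    and t_outside_support:
      "\<And>x r. x \<in> X \<Longrightarrow> r \<in> linorders X \<Longrightarrow> r \<notin> set_pmf \<nu> \<Longrightarrow> t x r = \<nu>"

lemma persistent_craving_repE:
  assumes "finite X" "persistent_craving_rep X t"
  obtains R \<nu> \<phi> where "persistent_craving X t R \<nu> \<phi>"
  using assms unfolding persistent_craving_rep_def persistent_craving_def by blast

context persistent_craving
begin

lemma t_craving:
  assumes "x \<in> X" "y \<in> X"
  shows "t x (craving X R y) = point_mix (\<phi> x y) (craving X R y) \<nu>"
proof -
  have "0 \<le> \<phi> x y" "\<phi> x y \<le> 1"
    using persistence assms by (auto simp: persistence_def less_imp_le)
  then show ?thesis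
    using assms by (intro pmf_eqI) (simp add: pmf_t_craving pmf_point_mix)
qed

lemma set_pmf_nu: "set_pmf \<nu> \<subseteq> craving X R ` X"
  using monotonic by (simp add: craving_monotonic_def)

lemma set_pmf_nu_linorders: "set_pmf \<nu> \<subseteq> linorders X"
  using set_pmf_nu craving_in_linorders[OF R_linorder] by blast

lemma X_not_empty: "X \<noteq> {}"
  using set_pmf_nu set_pmf_not_empty[of \<nu>] by blast

lemma row_eq_nu:
  assumes "r \<in> linorders X" "B \<subseteq> X" "B \<noteq> {}" "r \<notin> craving X R ` (X - B)"
  shows "t (maxel r B) r = \<nu>"
proof (cases "r \<in> set_pmf \<nu>")
  case True
  then obtain y where y: "y \<in> B" "r = craving X R y"
    using set_pmf_nu assms(4) by blast
  then have "\<phi> y y = 0"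
    using persistence assms(2) by (auto simp: persistence_def)
  then show ?thesis
    using y assms(2) t_craving maxel_craving[OF R_linorder] by auto
next
  case False
  have "maxel r B \<in> X"
    using maxel_in[OF finite_X assms(1-3)] assms(2) by blast
  then show ?thesis
    using t_outside_support assms(1) False by blast
qed

lemma pmf_craving_pos:
  assumes "card X \<ge> 2" "y \<in> X"
  shows "pmf \<nu> (craving X R y) > 0"
proof -
  obtain z where z: "z \<in> X" "z \<noteq> y"
    using card_ge_2_Diff_singleton_not_empty[OF assms(1), of y] by blast
  then have "(y, z) \<in> R \<or> (z, y) \<in> R"
    using R_linorder assms(2) by (auto simp: linorders_def strict_linear_order_on_def total_on_def)
  then show ?thesis
    using monotonic z assms(2) unfolding craving_monotonic_def by (meson order.strict_trans)
qed

lemma pmf_craving_less_1: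
  assumes "card X \<ge> 2" "x \<in> X"
  shows "pmf \<nu> (craving X R x) < 1"
proof -
  obtain y where y: "y \<in> X" "y \<noteq> x"
    using card_ge_2_Diff_singleton_not_empty[OF assms(1), of x] by blast
  then have "craving X R y \<noteq> craving X R x"
    using inj_on_craving assms(2) by (metis inj_on_contraD)
  then have "pmf \<nu> (craving X R x) + pmf \<nu> (craving X R y)
      = measure_pmf.prob \<nu> {craving X R x, craving X R y}"
    by (simp add: measure_measure_pmf_finite)
  also have "\<dots> \<le> 1"
    by simp
  finally show ?thesis
    using pmf_craving_pos[OF assms(1) y(1)] by simp
qed

lemma nu_full: "nu X t X = \<nu>"
proof (rule nu_eqI)
  have "\<forall>r\<in>linorders X. t (maxel r X) r = \<nu>"
    using row_eq_nu X_not_empty by simp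
  then show "stationary X t X \<pi> \<longleftrightarrow> \<pi> = \<nu>" for \<pi>
    unfolding stationary_iff_stationary_on
    by (rule stationary_on_const_iff[OF finite_linorders[OF finite_X] set_pmf_nu_linorders])
qed

lemma nu_remove:
  assumes "card X \<ge> 2" "x \<in> X"
  obtains w where "0 < w" "w \<le> 1" "nu X t (X - {x}) = point_mix w (craving X R x) \<nu>"
proof -
  define s where "s = craving X R x"
  define A where "A = X - {x}"
  have s: "s \<in> linorders X"
    unfolding s_def by (rule craving_in_linorders[OF R_linorder assms(2)])
  have A: "A \<subseteq> X" "A \<noteq> {}"
    unfolding A_def using card_ge_2_Diff_singleton_not_empty[OF assms(1)] by auto
  define a where "a = maxel s A"
  have "a \<in> A"
    unfolding a_def by (rule maxel_in[OF finite_X s A])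
  then have f: "0 < \<phi> a x" "\<phi> a x < 1"
    using persistence assms(2) by (auto simp: persistence_def A_def)
  have rows: "\<forall>r\<in>linorders X - {s}. t (maxel r A) r = \<nu>"
    using row_eq_nu[OF _ A] assms(2) by (auto simp: A_def s_def)
  have row_s: "t (maxel s A) s = point_mix (\<phi> a x) s \<nu>"
    using t_craving \<open>a \<in> A\<close> A(1) assms(2) by (auto simp: a_def s_def)
  have "stationary X t A \<pi> \<longleftrightarrow> \<pi> = point_mix (sticky_weight (\<phi> a x) (pmf \<nu> s)) s \<nu>" for \<pi>
    unfolding stationary_iff_stationary_on
    by (rule stationary_on_sticky_iff[OF finite_linorders[OF finite_X] set_pmf_nu_linorders s
          less_imp_le[OF f(1)] f(2) rows row_s])
  then have "nu X t A = point_mix (sticky_weight (\<phi> a x) (pmf \<nu> s)) s \<nu>"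
    by (rule nu_eqI)
  moreover have "0 < sticky_weight (\<phi> a x) (pmf \<nu> s)"
    using sticky_weight_pos[OF f] pmf_craving_pos[OF assms] by (simp add: s_def)
  moreover have "sticky_weight (\<phi> a x) (pmf \<nu> s) \<le> 1"
    by (rule sticky_weight_bounds[OF less_imp_le[OF f(1)] f(2) pmf_nonneg])
  ultimately show thesis
    using that unfolding A_def s_def by blast
qed

end

theorem proposition3:
  fixes X :: "'a set" and t :: "'a \<Rightarrow> 'a rel \<Rightarrow> 'a rel pmf"
  assumes "finite X" and "card X \<ge> 2"
    and "persistent_craving_rep X t"
    and "x \<in> X"
  shows "nu X t X \<noteq> nu X t (X - {x})"
proof -
  obtain R \<nu> \<phi> where "persistent_craving X t R \<nu> \<phi>"
    using persistent_craving_repE[OF assms(1,3)] .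
  then interpret persistent_craving X t R \<nu> \<phi> .
  obtain w where w: "0 < w" "w \<le> 1"
    and nu_remove_x: "nu X t (X - {x}) = point_mix w (craving X R x) \<nu>"
    using nu_remove[OF assms(2,4)] .
  show ?thesis
    using point_mix_neq[OF w pmf_craving_less_1[OF assms(2,4)]] nu_full nu_remove_x by simp
qed

end
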